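(* Let $p\ge1$ be an integer, let $N$ be a $p$-rooted almost-binary phylogenetic network on $X$, let $\mathcal{Z}=\{Z_1,\dots,Z_d\}$ be the set of maximal zig-zag trails of $N$ (whose edge-sets partition $E(N)$), and let $\mathcal{X}\in\{\mathcal{A},\mathcal{B},\mathcal{C}\}$. Then: (1) The map $S\mapsto (V(N),S)$ is a one-to-one correspondence between the family of $\mathcal{X}$-admissible subsets $S$ of $E(N)$ and the family $\mathcal{X}_N$ of support networks of $N$. (2) For $S\subseteq E(N)$, the spanning subgraph $(V(N),S)$ belongs to $\mathcal{X}_N$ if and only if $S\cap E(Z_i)$ is an $\mathcal{X}$-admissible subset of $E(Z_i)$ for every $i\in[1,d]$. (3) Identifying support networks with their edge-sets, $\mathcal{X}_N=\prod_{i=1}^d \mathcal{S}_{\mathcal{X}}(Z_i)$ (i.e., $\mathcal{X}_N=\{S_1\cup\dots\cup S_d : S_i\in\mathcal{S}_{\mathcal{X}}(Z_i)\}$), for any ordering $(Z_1,\dots,Z_d)$ of $\mathcal{Z}$. (4) $|\mathcal{X}_N|=\prod_{i=1}^d|\mathcal{S}_{\mathcal{X}}(Z_i)|$.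
   Context: A $p$-rooted almost-binary phylogenetic network on a non-empty finite set $X$ is a finite simple directed acyclic graph $N$ with exactly $p$ vertices of in-degree $0$ and out-degree $1$ or $2$ (roots), whose set of vertices of in-degree $1$ and out-degree $0$ is exactly $X$ (leaves), and every other vertex has in-degree and out-degree in $\{1,2\}$. A zig-zag trail is a connected subgraph $Z$ of $N$ with $m\ge1$ edges admitting an ordering $(e_1,\dots,e_m)$ of $E(Z)$ with $\mathrm{head}(e_i)=\mathrm{head}(e_{i+1})$ or $\mathrm{tail}(e_i)=\mathrm{tail}(e_{i+1})$ for all $i\in[1,m-1]$; it is maximal if not properly contained in another zig-zag trail. A support network of $N$ is a spanning subgraph $G$ of $N$ (i.e., $V(G)=V(N)$) that is itself a $p$-rooted almost-binary phylogenetic network on $X$; it is minimal if no support network of $N$ is a proper subgraph of $G$, and minimum if it has the minimum number of edges among all support networks of $N$. $\mathcal{A}_N,\mathcal{B}_N,\mathcal{C}_N$ denote the families of all, minimal, and minimum support networks of $N$, respectively. For a subgraph $Z$ of $N$, a subset $S\subseteq E(Z)$ is $\mathcal{A}$-admissible if (C1) every edge $(u,v)\in E(Z)$ with $\mathrm{outdeg}_N(u)=1$ or $\mathrm{indeg}_N(v)=1$ lies in $S$, and (C2) for any two distinct edges $e_1,e_2\in E(Z)$ with $\mathrm{tail}(e_1)=\mathrm{tail}(e_2)$ or $\mathrm{head}(e_1)=\mathrm{head}(e_2)$, at least one of $e_1,e_2$ lies in $S$. An $\mathcal{A}$-admissible $S$ is $\mathcal{B}$-admissible if no proper subset of $S$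 is $\mathcal{A}$-admissible, and $\mathcal{C}$-admissible if it has minimum cardinality among all $\mathcal{A}$-admissible subsets of $E(Z)$. $\mathcal{S}_{\mathcal{X}}(Z)$ denotes the family of $\mathcal{X}$-admissible subsets of $E(Z)$. *)

theory Defs
  imports Main
begin

(* A directed graph is given by a vertex set V and an edge set E of pairs (tail, head).
   Simplicity (no multi-edges) is automatic; loops are excluded by acyclicity. *)

definition indeg :: "('v \<times> 'v) set \<Rightarrow> 'v \<Rightarrow> nat" where
  "indeg E v = card {u. (u, v) \<in> E}"

definition outdeg :: "('v \<times> 'v) set \<Rightarrow> 'v \<Rightarrow> nat" where
  "outdeg E u = card {v. (u, v) \<in> E}"

definition is_root :: "('v \<times> 'v) set \<Rightarrow> 'v \<Rightarrow> bool" where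
  "is_root E v \<longleftrightarrow> indeg E v = 0 \<and> outdeg E v \<in> {1, 2}"

definition phylo_net :: "nat \<Rightarrow> 'v set \<Rightarrow> 'v set \<Rightarrow> ('v \<times> 'v) set \<Rightarrow> bool" where
  "phylo_net p X V E \<longleftrightarrow>
     finite V \<and> E \<subseteq> V \<times> V \<and> acyclic E \<and> X \<noteq> {} \<and>
     card {v \<in> V. is_root E v} = p \<and>
     X = {v \<in> V. indeg E v = 1 \<and> outdeg E v = 0} \<and>
     (\<forall>v \<in> V. is_root E v \<or> v \<in> X \<or> (indeg E v \<in> {1, 2} \<and> outdeg E v \<in> {1, 2}))"

definition support_nets :: "nat \<Rightarrow> 'v set \<Rightarrow> 'v set \<Rightarrow> ('v \<times> 'v) set \<Rightarrow> ('v set \<times> ('v \<times> 'v) set) set" where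
  "support_nets p X V E = {(V', E'). V' = V \<and> E' \<subseteq> E \<and> phylo_net p X V' E'}"

definition minimal_support_nets where
  "minimal_support_nets p X V E =
     {G \<in> support_nets p X V E. \<not> (\<exists>H \<in> support_nets p X V E.
          fst H \<subseteq> fst G \<and> snd H \<subseteq> snd G \<and> H \<noteq> G)}"

definition minimum_support_nets where
  "minimum_support_nets p X V E =
     {G \<in> support_nets p X V E. \<forall>H \<in> support_nets p X V E. card (snd G) \<le> card (snd H)}"

datatype family = FamA | FamB | FamC

definition supp_family :: "family \<Rightarrow> nat \<Rightarrow> 'v set \<Rightarrow> 'v set \<Rightarrow> ('v \<times> 'v) set \<Rightarrow> ('v set \<times> ('v \<times> 'v) set) set" where
  "supp_family F p X V E = (case F of
      FamA \<Rightarrow> support_nets p X V E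
    | FamB \<Rightarrow> minimal_support_nets p X V E
    | FamC \<Rightarrow> minimum_support_nets p X V E)"

(* Zig-zag trails. A zig-zag trail is a connected subgraph with at least one edge; being
   connected, its vertex set consists of the endpoints of its edges, so it is determined by
   its edge set Z. *)
definition zigzag :: "('v \<times> 'v) set \<Rightarrow> ('v \<times> 'v) set \<Rightarrow> bool" where
  "zigzag E Z \<longleftrightarrow> Z \<subseteq> E \<and>
     (\<exists>es. es \<noteq> [] \<and> distinct es \<and> set es = Z \<and>
        (\<forall>i. Suc i < length es \<longrightarrow>
           snd (es ! i) = snd (es ! Suc i) \<or> fst (es ! i) = fst (es ! Suc i)))"

definition max_zigzag :: "('v \<times> 'v) set \<Rightarrow> ('v \<times> 'v) set \<Rightarrow> bool" where
  "max_zigzag E Z \<longleftrightarrow> zigzag E Z \<and> \<not> (\<exists>Z'. zigzag E Z' \<and> Z \<subset> Z')"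

definition A_adm :: "('v \<times> 'v) set \<Rightarrow> ('v \<times> 'v) set \<Rightarrow> ('v \<times> 'v) set \<Rightarrow> bool" where
  "A_adm E Z S \<longleftrightarrow> S \<subseteq> Z \<and>
     (\<forall>u v. (u, v) \<in> Z \<and> (outdeg E u = 1 \<or> indeg E v = 1) \<longrightarrow> (u, v) \<in> S) \<and>
     (\<forall>e1 \<in> Z. \<forall>e2 \<in> Z. e1 \<noteq> e2 \<and> (fst e1 = fst e2 \<or> snd e1 = snd e2)
        \<longrightarrow> e1 \<in> S \<or> e2 \<in> S)"

definition B_adm where
  "B_adm E Z S \<longleftrightarrow> A_adm E Z S \<and> \<not> (\<exists>S'. S' \<subset> S \<and> A_adm E Z S')"

definition C_adm where
  "C_adm E Z S \<longleftrightarrow> A_adm E Z S \<and> (\<forall>S'. A_adm E Z S' \<longrightarrow> card S \<le> card S')"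

definition adm :: "family \<Rightarrow> ('v \<times> 'v) set \<Rightarrow> ('v \<times> 'v) set \<Rightarrow> ('v \<times> 'v) set \<Rightarrow> bool" where
  "adm F E Z S = (case F of FamA \<Rightarrow> A_adm E Z S | FamB \<Rightarrow> B_adm E Z S | FamC \<Rightarrow> C_adm E Z S)"

end

theory Submission
  imports Defs "HOL-Library.FuncSet" "HOL-Library.Disjoint_Sets"
begin

(*
  Vertices of a network have in- and out-degree at most 2, so an edge shares an endpoint
  with at most two other edges.  An inner edge of a zig-zag trail already has two such
  neighbours on the trail; hence an edge sharing an endpoint with a trail either lies on it
  or extends it at one of its ends.  Consequently the maximal zig-zag trails are closed under
  sharing an endpoint and partition E, and conditions (C1) and (C2) only ever relate edges of
  the same maximal trail.

  For S \<subseteq> E, the spanning subgraph (V, S) is again a p-rooted network exactly when every tail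
  of an edge keeps an outgoing edge and every head keeps an incoming edge (a head without
  incoming edge would be an extra root, while the roots of (V, E) stay roots and their number
  p is fixed); by the degree bound this is A-admissibility of S.  So A-admissibility of S is
  the conjunction of independent conditions on the pieces S \<inter> Z\<^sub>i.  Minimality and minimum
  cardinality decompose in the same way, because a piece can be exchanged without affecting
  the others and |S| = \<Sum>\<^sub>i |S \<inter> Z\<^sub>i|.
*)

section \<open>Degrees\<close>

lemma finite_out_neighbours: "finite E \<Longrightarrow> finite {v. (u, v) \<in> E}"
  by (rule finite_subset[of _ "snd ` E"]) force+

lemma finite_in_neighbours: "finite E \<Longrightarrow> finite {u. (u, v) \<in> E}"
  by (rule finite_subset[of _ "fst ` E"]) force+

lemma outdeg_eq_0_iff: "finite E \<Longrightarrow> outdeg E u = 0 \<longleftrightarrow> (\<nexists>v. (u, v) \<in> E)"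
  unfolding outdeg_def by (simp add: finite_out_neighbours)

lemma indeg_eq_0_iff: "finite E \<Longrightarrow> indeg E v = 0 \<longleftrightarrow> (\<nexists>u. (u, v) \<in> E)"
  unfolding indeg_def by (simp add: finite_in_neighbours)

lemma outdeg_mono: "finite E \<Longrightarrow> S \<subseteq> E \<Longrightarrow> outdeg S u \<le> outdeg E u"
  unfolding outdeg_def by (rule card_mono) (auto simp: finite_out_neighbours)

lemma indeg_mono: "finite E \<Longrightarrow> S \<subseteq> E \<Longrightarrow> indeg S v \<le> indeg E v"
  unfolding indeg_def by (rule card_mono) (auto simp: finite_in_neighbours)

lemma card_edges_with_tail: "card {e \<in> E. fst e = u} = outdeg E u"
proof -
  have "{e \<in> E. fst e = u} = Pair u ` {v. (u, v) \<in> E}" by force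
  then show ?thesis unfolding outdeg_def by (simp add: card_image inj_on_def)
qed

lemma card_edges_with_head: "card {e \<in> E. snd e = v} = indeg E v"
proof -
  have "{e \<in> E. snd e = v} = (\<lambda>u. (u, v)) ` {u. (u, v) \<in> E}" by force
  then show ?thesis unfolding indeg_def by (simp add: card_image inj_on_def)
qed

lemma outdeg_ne_1_other_edge:
  assumes "(u, v) \<in> E" "outdeg E u \<noteq> 1"
  obtains w where "w \<noteq> v" "(u, w) \<in> E"
proof -
  have "{w. (u, w) \<in> E} \<noteq> {v}" using assms(2) unfolding outdeg_def by force
  then show ?thesis using assms(1) that by blast
qed

lemma indeg_ne_1_other_edge:
  assumes "(u, v) \<in> E" "indeg E v \<noteq> 1"
  obtains w where "w \<noteq> u" "(w, v) \<in> E"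
proof -
  have "{w. (w, v) \<in> E} \<noteq> {u}" using assms(2) unfolding indeg_def by force
  then show ?thesis using assms(1) that by blast
qed

section \<open>Unions of choices from a disjoint family\<close>

lemma Union_disjoint_family_Int:
  assumes "disjoint_family_on Z I" "\<forall>i\<in>I. Ss i \<subseteq> Z i" "j \<in> I"
  shows "(\<Union>i\<in>I. Ss i) \<inter> Z j = Ss j"
proof -
  have "Ss i \<inter> Z j = {}" if "i \<in> I" "i \<noteq> j" for i
    using assms that unfolding disjoint_family_on_def by blast
  then show ?thesis using assms(2,3) by blast
qed

lemma Collect_eq_Unions_of_local:
  assumes disjoint: "disjoint_family_on Z I"
    and local: "\<And>S. P S \<longleftrightarrow> S \<subseteq> (\<Union>i\<in>I. Z i) \<and> (\<forall>i\<in>I. Q i (S \<inter> Z i))"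
    and sub: "\<And>i T. i \<in> I \<Longrightarrow> Q i T \<Longrightarrow> T \<subseteq> Z i"
  shows "{S. P S} = {(\<Union>i\<in>I. Ss i) | Ss. \<forall>i\<in>I. Q i (Ss i)}"
proof (intro equalityI subsetI)
  fix S assume "S \<in> {S. P S}"
  then have "S = (\<Union>i\<in>I. S \<inter> Z i)" "\<forall>i\<in>I. Q i (S \<inter> Z i)" using local by blast+
  then show "S \<in> {(\<Union>i\<in>I. Ss i) | Ss. \<forall>i\<in>I. Q i (Ss i)}" by blast
next
  fix S assume "S \<in> {(\<Union>i\<in>I. Ss i) | Ss. \<forall>i\<in>I. Q i (Ss i)}"
  then obtain Ss where S: "S = (\<Union>i\<in>I. Ss i)" and Q: "\<forall>i\<in>I. Q i (Ss i)" by blast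
  then have "\<forall>i\<in>I. Ss i \<subseteq> Z i" using sub by blast
  then have "S \<inter> Z i = Ss i" if "i \<in> I" for i
    using Union_disjoint_family_Int[OF disjoint _ that] S by blast
  moreover have "S \<subseteq> (\<Union>i\<in>I. Z i)" using S \<open>\<forall>i\<in>I. Ss i \<subseteq> Z i\<close> by blast
  ultimately show "S \<in> {S. P S}" using local Q by simp
qed

lemma card_Unions_of_choices:
  assumes "finite I" and disjoint: "disjoint_family_on Z I"
    and sub: "\<And>i T. i \<in> I \<Longrightarrow> Q i T \<Longrightarrow> T \<subseteq> Z i"
  shows "card {(\<Union>i\<in>I. Ss i) | Ss. \<forall>i\<in>I. Q i (Ss i)} = (\<Prod>i\<in>I. card {T. Q i T})"
proof -
  let ?U = "\<lambda>Ss. \<Union>i\<in>I. Ss i" and ?P = "\<Pi>\<^sub>E i\<in>I. {T. Q i T}"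
  have "{(\<Union>i\<in>I. Ss i) | Ss. \<forall>i\<in>I. Q i (Ss i)} = ?U ` ?P"
  proof (intro equalityI subsetI)
    fix S assume "S \<in> {(\<Union>i\<in>I. Ss i) | Ss. \<forall>i\<in>I. Q i (Ss i)}"
    then obtain Ss where "S = ?U Ss" "\<forall>i\<in>I. Q i (Ss i)" by blast
    then have "S = ?U (restrict Ss I)" "restrict Ss I \<in> ?P" by auto
    then show "S \<in> ?U ` ?P" by blast
  qed auto
  moreover have "inj_on ?U ?P"
  proof (rule inj_onI)
    fix Ss Ts assume "Ss \<in> ?P" "Ts \<in> ?P" "?U Ss = ?U Ts"
    have "Ss i = Ts i" if "i \<in> I" for i
    proof -
      have "\<forall>i\<in>I. Ss i \<subseteq> Z i" "\<forall>i\<in>I. Ts i \<subseteq> Z i"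
        using sub PiE_mem[OF \<open>Ss \<in> ?P\<close>] PiE_mem[OF \<open>Ts \<in> ?P\<close>] by auto
      then show ?thesis
        using Union_disjoint_family_Int[OF disjoint _ that] \<open>?U Ss = ?U Ts\<close> by metis
    qed
    then show "Ss = Ts" using \<open>Ss \<in> ?P\<close> \<open>Ts \<in> ?P\<close> by (intro PiE_ext) auto
  qed
  ultimately have "card {(\<Union>i\<in>I. Ss i) | Ss. \<forall>i\<in>I. Q i (Ss i)} = card ?P"
    by (simp add: card_image)
  also have "\<dots> = (\<Prod>i\<in>I. card {T. Q i T})" by (rule card_PiE[OF \<open>finite I\<close>])
  finally show ?thesis .
qed

section \<open>Zig-zag trails and admissibility\<close>

definition share_end :: "('v \<times> 'v) \<Rightarrow> ('v \<times> 'v) \<Rightarrow> bool" where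
  "share_end e f \<longleftrightarrow> snd e = snd f \<or> fst e = fst f"

lemma share_end_sym: "share_end e f \<Longrightarrow> share_end f e"
  unfolding share_end_def by auto

lemma zigzag_iff_successively:
  "zigzag E Z \<longleftrightarrow> Z \<subseteq> E \<and>
     (\<exists>es. es \<noteq> [] \<and> distinct es \<and> set es = Z \<and> successively share_end es)"
  by (simp add: zigzag_def successively_conv_nth share_end_def)

lemma successively_set_subset:
  assumes "successively R xs" and "set xs \<inter> M \<noteq> {}"
    and closed: "\<And>x y. x \<in> M \<Longrightarrow> y \<in> set xs \<Longrightarrow> R x y \<or> R y x \<Longrightarrow> y \<in> M"
  shows "set xs \<subseteq> M"
  using assms
proof (induction xs)
  case Nil
  then show ?case by simp
next
  case (Cons a xs)
  have IH: "set xs \<subseteq> M" if "set xs \<inter> M \<noteq> {}"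
    using Cons that by (auto simp: successively_Cons)
  have link: "R a (hd xs)" if "xs \<noteq> []"
    using Cons.prems(1) that by (simp add: successively_Cons)
  show ?case
  proof (cases "xs = []")
    case True
    then show ?thesis using Cons.prems(2) by simp
  next
    case False
    then have hd: "hd xs \<in> set xs" by simp
    have "a \<in> M"
    proof (rule ccontr)
      assume "a \<notin> M"
      then have "hd xs \<in> M" using IH hd Cons.prems(2) by auto
      then show False using Cons.prems(3) link[OF False] \<open>a \<notin> M\<close> by auto
    qed
    then have "hd xs \<in> M" using Cons.prems(3) link[OF False] hd by auto
    then show ?thesis using IH hd \<open>a \<in> M\<close> by auto
  qed
qed

lemma adm_subset: "adm F E Z S \<Longrightarrow> S \<subseteq> Z"
  unfolding adm_def B_adm_def C_adm_def A_adm_def by (cases F) auto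

definition covers_ends :: "('v \<times> 'v) set \<Rightarrow> ('v \<times> 'v) set \<Rightarrow> bool" where
  "covers_ends E S \<longleftrightarrow> (\<forall>(u, v) \<in> E. (\<exists>w. (u, w) \<in> S) \<and> (\<exists>w. (w, v) \<in> S))"

locale binary_digraph =
  fixes E :: "('v \<times> 'v) set"
  assumes finite_edges: "finite E"
    and outdeg_le_2: "outdeg E u \<le> 2"
    and indeg_le_2: "indeg E v \<le> 2"
begin

lemma card_adjacent_edges:
  assumes "e \<in> E"
  shows "card {f \<in> E. f \<noteq> e \<and> share_end e f} \<le> 2"
proof -
  let ?T = "{f \<in> E. fst f = fst e}" and ?H = "{f \<in> E. snd f = snd e}"
  have "card (?T - {e}) \<le> 1" "card (?H - {e}) \<le> 1"
    using assms outdeg_le_2[of "fst e"] indeg_le_2[of "snd e"]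
    by (simp_all add: card_edges_with_tail card_edges_with_head)
  moreover have "{f \<in> E. f \<noteq> e \<and> share_end e f} \<subseteq> (?T - {e}) \<union> (?H - {e})"
    unfolding share_end_def by auto
  ultimately show ?thesis
    using card_mono[OF _ \<open>_ \<subseteq> (?T - {e}) \<union> (?H - {e})\<close>] card_Un_le[of "?T - {e}" "?H - {e}"]
      finite_edges by fastforce
qed

lemma zigzag_insert_adjacent:
  assumes "zigzag E Z" "e \<in> Z" "f \<in> E" "f \<notin> Z" "share_end e f"
  shows "zigzag E (insert f Z)"
proof -
  obtain es where es: "Z \<subseteq> E" "es \<noteq> []" "distinct es" "set es = Z" "successively share_end es"
    using assms(1) unfolding zigzag_iff_successively by blast
  obtain i where i: "i < length es" "es ! i = e"
    using assms(2) es(4) by (metis in_set_conv_nth)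
  have "i = 0 \<or> i = length es - 1"
  proof (rule ccontr)
    assume "\<not> (i = 0 \<or> i = length es - 1)"
    then have "0 < i" "Suc i < length es" using i by auto
    define x y where "x = es ! (i - 1)" and "y = es ! Suc i"
    have "share_end x e" "share_end e y"
      using successively_nth[OF es(5), of "i - 1"] successively_nth[OF es(5), of i]
        \<open>0 < i\<close> \<open>Suc i < length es\<close> i unfolding x_def y_def by simp_all
    moreover have "x \<in> Z" "y \<in> Z" "x \<noteq> e" "y \<noteq> e" "x \<noteq> y"
      using \<open>0 < i\<close> \<open>Suc i < length es\<close> i es(3,4) unfolding x_def y_def
      by (auto simp: nth_eq_iff_index_eq)
    ultimately have sub: "{x, y, f} \<subseteq> {g \<in> E. g \<noteq> e \<and> share_end e g}"
      using assms(2-5) es(1) share_end_sym[of x e] by auto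
    have "card {x, y, f} = 3"
      using \<open>x \<in> Z\<close> \<open>y \<in> Z\<close> \<open>x \<noteq> y\<close> assms(4) by (auto simp: card_insert_if)
    moreover have "card {x, y, f} \<le> card {g \<in> E. g \<noteq> e \<and> share_end e g}"
      using sub finite_edges by (intro card_mono) auto
    ultimately show False using card_adjacent_edges[of e] assms(2) es(1) by auto
  qed
  then show ?thesis
  proof
    assume "i = 0"
    then have "successively share_end (f # es)"
      using es(2,5) i share_end_sym[OF assms(5)] by (simp add: successively_Cons hd_conv_nth)
    then show ?thesis unfolding zigzag_iff_successively using es assms(3,4)
      by (intro conjI exI[of _ "f # es"]) auto
  next
    assume "i = length es - 1"
    then have "successively share_end (es @ [f])"
      using es(2,5) i assms(5) by (simp add: successively_append_iff last_conv_nth)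
    then show ?thesis unfolding zigzag_iff_successively using es assms(3,4)
      by (intro conjI exI[of _ "es @ [f]"]) auto
  qed
qed

lemma max_zigzag_adjacent_closed:
  assumes "max_zigzag E M" "e \<in> M" "f \<in> E" "share_end e f"
  shows "f \<in> M"
proof (rule ccontr)
  assume "f \<notin> M"
  then have "zigzag E (insert f M)" "M \<subset> insert f M"
    using zigzag_insert_adjacent assms unfolding max_zigzag_def by blast+
  then show False using assms(1) unfolding max_zigzag_def by blast
qed

lemma max_zigzag_superset:
  assumes "max_zigzag E M" "zigzag E Z" "Z \<inter> M \<noteq> {}"
  shows "Z \<subseteq> M"
proof -
  obtain es where es: "Z \<subseteq> E" "set es = Z" "successively share_end es"
    using assms(2) unfolding zigzag_iff_successively by blast
  have "set es \<subseteq> M"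
  proof (rule successively_set_subset[OF es(3)])
    show "set es \<inter> M \<noteq> {}" using assms(3) es(2) by simp
    fix x y assume "x \<in> M" "y \<in> set es" "share_end x y \<or> share_end y x"
    then have "share_end x y" using share_end_sym by blast
    then show "y \<in> M"
      using max_zigzag_adjacent_closed[OF assms(1) \<open>x \<in> M\<close>] \<open>y \<in> set es\<close> es(1,2) by blast
  qed
  then show ?thesis using es(2) by simp
qed

lemma max_zigzag_disjoint:
  assumes "max_zigzag E M" "max_zigzag E M'" "M \<noteq> M'"
  shows "M \<inter> M' = {}"
proof (rule ccontr)
  assume "M \<inter> M' \<noteq> {}"
  moreover have "zigzag E M" "zigzag E M'" using assms(1,2) unfolding max_zigzag_def by blast+
  ultimately have "M' \<subseteq> M" "M \<subseteq> M'"
    using max_zigzag_superset[OF assms(1)] max_zigzag_superset[OF assms(2)] by blast+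
  then show False using assms(3) by blast
qed

lemma max_zigzag_subset: "max_zigzag E M \<Longrightarrow> M \<subseteq> E"
  unfolding max_zigzag_def zigzag_def by blast

lemma ex_max_zigzag_superset:
  assumes "zigzag E Z"
  shows "\<exists>M. max_zigzag E M \<and> Z \<subseteq> M"
proof -
  have "{Z. zigzag E Z} \<subseteq> Pow E" by (auto simp: zigzag_def)
  then have "finite {Z. zigzag E Z}" using finite_edges finite_subset by blast
  from finite_has_maximal2[OF this, of Z] assms obtain M
    where "zigzag E M" "Z \<subseteq> M" "\<forall>Z'. zigzag E Z' \<longrightarrow> M \<subseteq> Z' \<longrightarrow> M = Z'"
    by auto
  then show ?thesis unfolding max_zigzag_def by blast
qed

lemma edge_in_max_zigzag: "e \<in> E \<Longrightarrow> \<exists>M. max_zigzag E M \<and> e \<in> M"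
proof -
  assume "e \<in> E"
  then have "zigzag E {e}" unfolding zigzag_def by (intro conjI exI[of _ "[e]"]) auto
  then show ?thesis using ex_max_zigzag_superset by blast
qed

lemma Union_max_zigzag: "\<Union>{M. max_zigzag E M} = E"
  using max_zigzag_subset edge_in_max_zigzag by blast

lemma max_zigzag_list_partition:
  assumes "distinct Zs" "set Zs = {M. max_zigzag E M}"
  shows "disjoint_family_on ((!) Zs) {..<length Zs}" "(\<Union>i<length Zs. Zs ! i) = E"
proof -
  have "Zs ! i \<inter> Zs ! j = {}" if "i < length Zs" "j < length Zs" "i \<noteq> j" for i j
  proof (rule max_zigzag_disjoint)
    show "max_zigzag E (Zs ! i)" "max_zigzag E (Zs ! j)" using assms(2) that(1,2) nth_mem by blast+
    show "Zs ! i \<noteq> Zs ! j" using assms(1) that by (simp add: nth_eq_iff_index_eq)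
  qed
  then show "disjoint_family_on ((!) Zs) {..<length Zs}"
    unfolding disjoint_family_on_def by simp
  have "(\<Union>i<length Zs. Zs ! i) = \<Union>(set Zs)" by (metis image_set map_nth set_upt atLeast_upt)
  then show "(\<Union>i<length Zs. Zs ! i) = E" using assms(2) Union_max_zigzag by simp
qed

lemma finite_max_zigzags: "finite {M. max_zigzag E M}"
proof -
  have "{M. max_zigzag E M} \<subseteq> Pow E" using max_zigzag_subset by blast
  then show ?thesis using finite_edges by (simp add: finite_subset)
qed

lemma A_adm_iff_local:
  "A_adm E E S \<longleftrightarrow> S \<subseteq> E \<and> (\<forall>M. max_zigzag E M \<longrightarrow> A_adm E M (S \<inter> M))"
proof
  assume "A_adm E E S"
  then show "S \<subseteq> E \<and> (\<forall>M. max_zigzag E M \<longrightarrow> A_adm E M (S \<inter> M))"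
    using max_zigzag_subset unfolding A_adm_def by blast
next
  assume local: "S \<subseteq> E \<and> (\<forall>M. max_zigzag E M \<longrightarrow> A_adm E M (S \<inter> M))"
  have "(u, v) \<in> S" if "(u, v) \<in> E" "outdeg E u = 1 \<or> indeg E v = 1" for u v
    using edge_in_max_zigzag[OF that(1)] local that(2) unfolding A_adm_def by blast
  moreover have "e1 \<in> S \<or> e2 \<in> S"
    if e: "e1 \<in> E" "e2 \<in> E" "e1 \<noteq> e2" "fst e1 = fst e2 \<or> snd e1 = snd e2" for e1 e2
  proof -
    obtain M where M: "max_zigzag E M" "e1 \<in> M" using edge_in_max_zigzag[OF e(1)] by blast
    then have "e2 \<in> M"
      using max_zigzag_adjacent_closed e(2,4) unfolding share_end_def by blast
    then show ?thesis using local M e(3,4) unfolding A_adm_def by blast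
  qed
  ultimately show "A_adm E E S" using local unfolding A_adm_def by blast
qed

lemma A_adm_replace:
  assumes "A_adm E E S" "max_zigzag E M" "A_adm E M T"
  shows "A_adm E E ((S - M) \<union> T)"
proof -
  have "T \<subseteq> M" using assms(3) unfolding A_adm_def by blast
  have "A_adm E M' (((S - M) \<union> T) \<inter> M')" if "max_zigzag E M'" for M'
  proof (cases "M' = M")
    case True
    have "((S - M) \<union> T) \<inter> M = T" using \<open>T \<subseteq> M\<close> by blast
    then show ?thesis using assms(3) True by simp
  next
    case False
    then have "((S - M) \<union> T) \<inter> M' = S \<inter> M'"
      using max_zigzag_disjoint[OF that assms(2)] \<open>T \<subseteq> M\<close> by blast
    then show ?thesis using assms(1) that A_adm_iff_local[of S] by simp
  qed
  moreover have "(S - M) \<union> T \<subseteq> E"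
    using assms(1) \<open>T \<subseteq> M\<close> max_zigzag_subset[OF assms(2)] unfolding A_adm_def by blast
  ultimately show ?thesis using A_adm_iff_local[of "(S - M) \<union> T"] by blast
qed

lemma B_adm_iff_local:
  "B_adm E E S \<longleftrightarrow> S \<subseteq> E \<and> (\<forall>M. max_zigzag E M \<longrightarrow> B_adm E M (S \<inter> M))"
proof
  assume B: "B_adm E E S"
  then have A: "A_adm E E S" unfolding B_adm_def by blast
  have "B_adm E M (S \<inter> M)" if M: "max_zigzag E M" for M
  proof -
    have "\<not> A_adm E M T" if "T \<subset> S \<inter> M" for T
    proof
      assume "A_adm E M T"
      then have "A_adm E E ((S - M) \<union> T)" by (rule A_adm_replace[OF A M])
      moreover have "(S - M) \<union> T \<subset> S" using \<open>T \<subset> S \<inter> M\<close> by blast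
      ultimately show False using B unfolding B_adm_def by blast
    qed
    moreover have "A_adm E M (S \<inter> M)" using A M A_adm_iff_local[of S] by blast
    ultimately show ?thesis unfolding B_adm_def by blast
  qed
  then show "S \<subseteq> E \<and> (\<forall>M. max_zigzag E M \<longrightarrow> B_adm E M (S \<inter> M))"
    using A A_adm_iff_local[of S] by blast
next
  assume local: "S \<subseteq> E \<and> (\<forall>M. max_zigzag E M \<longrightarrow> B_adm E M (S \<inter> M))"
  then have A: "A_adm E E S" using A_adm_iff_local[of S] unfolding B_adm_def by blast
  have "\<not> A_adm E E S'" if "S' \<subset> S" for S'
  proof
    assume "A_adm E E S'"
    obtain e where "e \<in> S" "e \<notin> S'" using \<open>S' \<subset> S\<close> by blast
    then obtain M where M: "max_zigzag E M" "e \<in> M" using edge_in_max_zigzag local by blast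
    have "A_adm E M (S' \<inter> M)" using \<open>A_adm E E S'\<close> M(1) A_adm_iff_local[of S'] by blast
    moreover have "S' \<inter> M \<subset> S \<inter> M" using \<open>S' \<subset> S\<close> \<open>e \<in> S\<close> \<open>e \<notin> S'\<close> M(2) by blast
    ultimately show False using local M(1) unfolding B_adm_def by blast
  qed
  then show "B_adm E E S" using A unfolding B_adm_def by blast
qed

lemma card_eq_sum_max_zigzags:
  assumes "S \<subseteq> E"
  shows "card S = (\<Sum>M | max_zigzag E M. card (S \<inter> M))"
proof -
  have "S = (\<Union>M \<in> {M. max_zigzag E M}. S \<inter> M)" using assms Union_max_zigzag by blast
  also have "card \<dots> = (\<Sum>M | max_zigzag E M. card (S \<inter> M))"
    using finite_max_zigzags finite_subset[OF assms finite_edges] max_zigzag_disjoint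
    by (intro card_UN_disjoint) auto
  finally show ?thesis .
qed

lemma C_adm_iff_local:
  "C_adm E E S \<longleftrightarrow> S \<subseteq> E \<and> (\<forall>M. max_zigzag E M \<longrightarrow> C_adm E M (S \<inter> M))"
proof
  assume C: "C_adm E E S"
  then have A: "A_adm E E S" unfolding C_adm_def by blast
  then have "S \<subseteq> E" unfolding A_adm_def by blast
  have "C_adm E M (S \<inter> M)" if M: "max_zigzag E M" for M
  proof -
    have "card (S \<inter> M) \<le> card T" if "A_adm E M T" for T
    proof -
      have "T \<subseteq> M" using that unfolding A_adm_def by blast
      have "T \<subseteq> E" using \<open>T \<subseteq> M\<close> max_zigzag_subset[OF M] by blast
      have fin: "finite S" "finite T"
        using finite_subset[OF \<open>S \<subseteq> E\<close> finite_edges] finite_subset[OF \<open>T \<subseteq> E\<close> finite_edges] .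
      have "card S \<le> card ((S - M) \<union> T)"
        using C A_adm_replace[OF A M that] unfolding C_adm_def by blast
      also have "\<dots> = card (S - M) + card T"
        using fin \<open>T \<subseteq> M\<close> by (intro card_Un_disjoint) auto
      moreover have "card (S - M) = card S - card (S \<inter> M)"
        using fin(1) by (simp add: card_Diff_subset_Int)
      moreover have "card (S \<inter> M) \<le> card S" using card_mono[OF fin(1) Int_lower1] .
      ultimately show ?thesis by linarith
    qed
    moreover have "A_adm E M (S \<inter> M)" using A M A_adm_iff_local[of S] by blast
    ultimately show ?thesis unfolding C_adm_def by blast
  qed
  then show "S \<subseteq> E \<and> (\<forall>M. max_zigzag E M \<longrightarrow> C_adm E M (S \<inter> M))"
    using \<open>S \<subseteq> E\<close> by blast
next
  assume local: "S \<subseteq> E \<and> (\<forall>M. max_zigzag E M \<longrightarrow> C_adm E M (S \<inter> M))"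
  then have A: "A_adm E E S" using A_adm_iff_local[of S] unfolding C_adm_def by blast
  have "card S \<le> card S'" if "A_adm E E S'" for S'
  proof -
    have "S' \<subseteq> E" using that unfolding A_adm_def by blast
    have "card S = (\<Sum>M | max_zigzag E M. card (S \<inter> M))"
      using local card_eq_sum_max_zigzags by blast
    also have "\<dots> \<le> (\<Sum>M | max_zigzag E M. card (S' \<inter> M))"
    proof (rule sum_mono)
      fix M assume "M \<in> {M. max_zigzag E M}"
      then have "max_zigzag E M" by simp
      then have "A_adm E M (S' \<inter> M)" using that A_adm_iff_local[of S'] by blast
      then show "card (S \<inter> M) \<le> card (S' \<inter> M)"
        using local \<open>max_zigzag E M\<close> unfolding C_adm_def by blast
    qed
    also have "\<dots> = card S'" using card_eq_sum_max_zigzags[OF \<open>S' \<subseteq> E\<close>] by simp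
    finally show ?thesis .
  qed
  then show "C_adm E E S" using A unfolding C_adm_def by blast
qed

lemma adm_iff_local:
  "adm F E E S \<longleftrightarrow> S \<subseteq> E \<and> (\<forall>M. max_zigzag E M \<longrightarrow> adm F E M (S \<inter> M))"
  using A_adm_iff_local[of S] B_adm_iff_local[of S] C_adm_iff_local[of S]
  unfolding adm_def by (cases F) auto

lemma adm_product_decomposition:
  assumes "distinct Zs" "set Zs = {M. max_zigzag E M}"
  shows "{S. adm F E E S} = {(\<Union>i<length Zs. Ss i) | Ss. \<forall>i<length Zs. adm F E (Zs ! i) (Ss i)}"
    and "card {S. adm F E E S} = (\<Prod>i<length Zs. card {S. adm F E (Zs ! i) S})"
proof -
  note partition = max_zigzag_list_partition[OF assms]
  have max_iff: "max_zigzag E M \<longleftrightarrow> (\<exists>i<length Zs. M = Zs ! i)" for M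
    using assms(2) in_set_conv_nth[of M Zs] by auto
  have local: "adm F E E S \<longleftrightarrow> S \<subseteq> (\<Union>i<length Zs. Zs ! i)
                        \<and> (\<forall>i\<in>{..<length Zs}. adm F E (Zs ! i) (S \<inter> Zs ! i))" for S
    unfolding adm_iff_local[of F S] partition(2) max_iff by auto
  have "{S. adm F E E S} =
          {(\<Union>i<length Zs. Ss i) | Ss. \<forall>i\<in>{..<length Zs}. adm F E (Zs ! i) (Ss i)}"
    by (rule Collect_eq_Unions_of_local[OF partition(1) local]) (rule adm_subset)
  moreover have "card \<dots> = (\<Prod>i<length Zs. card {S. adm F E (Zs ! i) S})"
    by (rule card_Unions_of_choices[OF _ partition(1)]) (simp_all add: adm_subset)
  ultimately show
    "{S. adm F E E S} = {(\<Union>i<length Zs. Ss i) | Ss. \<forall>i<length Zs. adm F E (Zs ! i) (Ss i)}"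
    "card {S. adm F E E S} = (\<Prod>i<length Zs. card {S. adm F E (Zs ! i) S})"
    by (simp_all add: Ball_def)
qed

lemma edge_with_shared_tail_cases:
  assumes "e1 \<in> E" "e2 \<in> E" "e1 \<noteq> e2" "e \<in> E" "fst e1 = fst e" "fst e2 = fst e"
  shows "e = e1 \<or> e = e2"
proof (rule ccontr)
  assume "\<not> (e = e1 \<or> e = e2)"
  then have "card {e1, e2, e} = 3" using assms(3) by (auto simp: card_insert_if)
  moreover have "card {e1, e2, e} \<le> card {f \<in> E. fst f = fst e}"
    using assms finite_edges by (intro card_mono) auto
  ultimately show False using outdeg_le_2[of "fst e"] by (simp add: card_edges_with_tail)
qed

lemma edge_with_shared_head_cases:
  assumes "e1 \<in> E" "e2 \<in> E" "e1 \<noteq> e2" "e \<in> E" "snd e1 = snd e" "snd e2 = snd e"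
  shows "e = e1 \<or> e = e2"
proof (rule ccontr)
  assume "\<not> (e = e1 \<or> e = e2)"
  then have "card {e1, e2, e} = 3" using assms(3) by (auto simp: card_insert_if)
  moreover have "card {e1, e2, e} \<le> card {f \<in> E. snd f = snd e}"
    using assms finite_edges by (intro card_mono) auto
  ultimately show False using indeg_le_2[of "snd e"] by (simp add: card_edges_with_head)
qed

lemma A_adm_iff_covers_ends: "A_adm E E S \<longleftrightarrow> S \<subseteq> E \<and> covers_ends E S"
proof
  assume A: "A_adm E E S"
  have C2: "e1 \<in> S \<or> e2 \<in> S"
    if "e1 \<in> E" "e2 \<in> E" "e1 \<noteq> e2" "fst e1 = fst e2 \<or> snd e1 = snd e2" for e1 e2
    using A that unfolding A_adm_def by blast
  have "(\<exists>w. (u, w) \<in> S) \<and> (\<exists>w. (w, v) \<in> S)" if uv: "(u, v) \<in> E" for u v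
  proof (cases "(u, v) \<in> S")
    case False
    then have "outdeg E u \<noteq> 1" "indeg E v \<noteq> 1" using A uv unfolding A_adm_def by blast+
    obtain w where "w \<noteq> v" "(u, w) \<in> E"
      using outdeg_ne_1_other_edge[OF uv \<open>outdeg E u \<noteq> 1\<close>] .
    obtain w' where "w' \<noteq> u" "(w', v) \<in> E"
      using indeg_ne_1_other_edge[OF uv \<open>indeg E v \<noteq> 1\<close>] .
    have "(u, w) \<in> S" using C2[OF uv \<open>(u, w) \<in> E\<close>] \<open>w \<noteq> v\<close> False by auto
    moreover have "(w', v) \<in> S" using C2[OF uv \<open>(w', v) \<in> E\<close>] \<open>w' \<noteq> u\<close> False by auto
    ultimately show ?thesis by blast
  qed blast
  then show "S \<subseteq> E \<and> covers_ends E S" using A unfolding A_adm_def covers_ends_def by blast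
next
  assume cover: "S \<subseteq> E \<and> covers_ends E S"
  have "(u, v) \<in> S" if uv: "(u, v) \<in> E" and deg: "outdeg E u = 1 \<or> indeg E v = 1" for u v
  proof -
    obtain w w' where S: "(u, w) \<in> S" "(w', v) \<in> S"
      using cover uv unfolding covers_ends_def by blast
    then have "w \<in> {x. (u, x) \<in> E}" "w' \<in> {x. (x, v) \<in> E}" using cover by blast+
    moreover have "v \<in> {x. (u, x) \<in> E}" "u \<in> {x. (x, v) \<in> E}" using uv by simp_all
    ultimately have "outdeg E u = 1 \<Longrightarrow> w = v" "indeg E v = 1 \<Longrightarrow> w' = u"
      unfolding outdeg_def indeg_def by (metis card_1_singletonE singletonD)+
    then show ?thesis using deg S by blast
  qed
  moreover have "e1 \<in> S \<or> e2 \<in> S"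
    if e: "e1 \<in> E" "e2 \<in> E" "e1 \<noteq> e2" "fst e1 = fst e2 \<or> snd e1 = snd e2" for e1 e2
    using e(4)
  proof
    assume "fst e1 = fst e2"
    obtain w where "(fst e1, w) \<in> S" using cover e(1) unfolding covers_ends_def by fastforce
    moreover have "(fst e1, w) = e1 \<or> (fst e1, w) = e2"
      using calculation cover \<open>fst e1 = fst e2\<close>
      by (intro edge_with_shared_tail_cases[OF e(1-3)]) auto
    ultimately show ?thesis by metis
  next
    assume "snd e1 = snd e2"
    obtain w where "(w, snd e1) \<in> S" using cover e(1) unfolding covers_ends_def by fastforce
    moreover have "(w, snd e1) = e1 \<or> (w, snd e1) = e2"
      using calculation cover \<open>snd e1 = snd e2\<close>
      by (intro edge_with_shared_head_cases[OF e(1-3)]) auto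
    ultimately show ?thesis by metis
  qed
  ultimately show "A_adm E E S" using cover unfolding A_adm_def by blast
qed

end

section \<open>Support networks\<close>

lemma phylo_net_finite_edges: "phylo_net p X V E \<Longrightarrow> finite E"
  unfolding phylo_net_def using finite_cartesian_product finite_subset by blast

lemma phylo_net_degrees_le_2:
  assumes "phylo_net p X V E"
  shows "outdeg E u \<le> 2 \<and> indeg E u \<le> 2"
proof (cases "u \<in> V")
  case True
  then show ?thesis using assms unfolding phylo_net_def is_root_def by auto
next
  case False
  then have "{v. (u, v) \<in> E} = {}" "{v. (v, u) \<in> E} = {}"
    using assms unfolding phylo_net_def by auto
  then show ?thesis unfolding outdeg_def indeg_def by simp
qed

lemma phylo_net_binary_digraph:
  assumes "phylo_net p X V E"
  shows "binary_digraph E"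
proof
  show "finite E" using phylo_net_finite_edges[OF assms] .
  show "outdeg E u \<le> 2" "indeg E v \<le> 2" for u v
    using phylo_net_degrees_le_2[OF assms] by blast+
qed

lemma phylo_net_covers_ends:
  assumes N: "phylo_net p X V E" and "S \<subseteq> E" and NS: "phylo_net p X V S"
  shows "covers_ends E S"
proof -
  have fin: "finite E" "finite S"
    using phylo_net_finite_edges N NS by blast+
  have roots: "{v \<in> V. is_root E v} = {v \<in> V. is_root S v}"
    \<comment> \<open>deleting edges keeps roots, and both networks have exactly p roots\<close>
  proof (rule card_subset_eq)
    show "finite {v \<in> V. is_root S v}" using NS unfolding phylo_net_def by simp
    show "card {v \<in> V. is_root E v} = card {v \<in> V. is_root S v}"
      using N NS unfolding phylo_net_def by simp
    show "{v \<in> V. is_root E v} \<subseteq> {v \<in> V. is_root S v}"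
    proof clarify
      fix v assume "v \<in> V" "is_root E v"
      then have "indeg S v = 0" using indeg_mono[OF fin(1) \<open>S \<subseteq> E\<close>, of v] unfolding is_root_def by simp
      then show "is_root S v" using NS \<open>v \<in> V\<close> unfolding phylo_net_def by auto
    qed
  qed
  have "(\<exists>w. (u, w) \<in> S) \<and> (\<exists>w. (w, v) \<in> S)" if uv: "(u, v) \<in> E" for u v
  proof (intro conjI; rule ccontr)
    assume "\<nexists>w. (u, w) \<in> S"
    then have "outdeg S u = 0" "u \<in> V" using outdeg_eq_0_iff[OF fin(2)] uv N
      unfolding phylo_net_def by auto
    then have "outdeg E u = 0" using NS N unfolding phylo_net_def is_root_def by auto
    then show False using outdeg_eq_0_iff[OF fin(1)] uv by blast
  next
    assume "\<nexists>w. (w, v) \<in> S"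
    then have "indeg S v = 0" "v \<in> V" using indeg_eq_0_iff[OF fin(2)] uv N
      unfolding phylo_net_def by auto
    then have "is_root S v" using NS unfolding phylo_net_def by auto
    then have "indeg E v = 0" using roots \<open>v \<in> V\<close> unfolding is_root_def by blast
    then show False using indeg_eq_0_iff[OF fin(1)] uv by blast
  qed
  then show ?thesis unfolding covers_ends_def by blast
qed

lemma phylo_net_if_covers_ends:
  assumes N: "phylo_net p X V E" and "S \<subseteq> E" and cover: "covers_ends E S"
  shows "phylo_net p X V S"
proof -
  have fin: "finite E" "finite S"
    using phylo_net_finite_edges[OF N] finite_subset[OF \<open>S \<subseteq> E\<close>] by blast+
  have zero: "outdeg S u = 0 \<longleftrightarrow> outdeg E u = 0" "indeg S u = 0 \<longleftrightarrow> indeg E u = 0" for u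
    using cover \<open>S \<subseteq> E\<close> unfolding outdeg_eq_0_iff[OF fin(1)] outdeg_eq_0_iff[OF fin(2)]
      indeg_eq_0_iff[OF fin(1)] indeg_eq_0_iff[OF fin(2)] covers_ends_def by blast+
  have le: "outdeg S u \<le> outdeg E u" "indeg S u \<le> indeg E u" "outdeg E u \<le> 2" "indeg E u \<le> 2" for u
    using outdeg_mono[OF fin(1) \<open>S \<subseteq> E\<close>] indeg_mono[OF fin(1) \<open>S \<subseteq> E\<close>]
      phylo_net_degrees_le_2[OF N] by blast+
  have root: "is_root S u \<longleftrightarrow> is_root E u" for u
    using zero[of u] le[of u] unfolding is_root_def by auto
  have leaf: "indeg S v = 1 \<and> outdeg S v = 0 \<longleftrightarrow> indeg E v = 1 \<and> outdeg E v = 0" if "v \<in> V" for v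
    using zero[of v] le[of v] N that unfolding phylo_net_def is_root_def by auto
  have inner: "indeg S v \<in> {1, 2} \<and> outdeg S v \<in> {1, 2}"
    if "indeg E v \<in> {1, 2} \<and> outdeg E v \<in> {1, 2}" for v
    using zero[of v] le[of v] that by auto
  have "S \<subseteq> V \<times> V" "acyclic S"
    using N \<open>S \<subseteq> E\<close> acyclic_subset[of E S] unfolding phylo_net_def by blast+
  moreover have "card {v \<in> V. is_root S v} = p" using N root unfolding phylo_net_def by simp
  moreover have "X = {v \<in> V. indeg S v = 1 \<and> outdeg S v = 0}"
    using N leaf unfolding phylo_net_def by blast
  moreover have "is_root S v \<or> v \<in> X \<or> (indeg S v \<in> {1, 2} \<and> outdeg S v \<in> {1, 2})"
    if "v \<in> V" for v
    using N that root[of v] inner[of v] unfolding phylo_net_def by blast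
  ultimately show ?thesis using N unfolding phylo_net_def by blast
qed

lemma support_nets_eq_image:
  assumes N: "phylo_net p X V E"
  shows "support_nets p X V E = Pair V ` {S. A_adm E E S}"
proof -
  have "S \<subseteq> E \<and> phylo_net p X V S \<longleftrightarrow> A_adm E E S" for S
    using phylo_net_covers_ends[OF N] phylo_net_if_covers_ends[OF N]
      binary_digraph.A_adm_iff_covers_ends[OF phylo_net_binary_digraph[OF N], of S] by blast
  then show ?thesis unfolding support_nets_def by auto
qed

lemma supp_family_eq_image:
  assumes N: "phylo_net p X V E"
  shows "supp_family F p X V E = Pair V ` {S. adm F E E S}"
proof (cases F)
  case FamA
  then show ?thesis using support_nets_eq_image[OF N] unfolding supp_family_def adm_def by simp
next
  case FamB
  then show ?thesis
    unfolding supp_family_def adm_def minimal_support_nets_def support_nets_eq_image[OF N]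
      Compr_image_eq B_adm_def
    by (simp add: psubset_eq) blast
next
  case FamC
  then show ?thesis
    unfolding supp_family_def adm_def minimum_support_nets_def support_nets_eq_image[OF N]
      Compr_image_eq C_adm_def
    by simp
qed

theorem theorem4p2:
  fixes p :: nat and X V :: "'v set" and E :: "('v \<times> 'v) set" and F :: family
  assumes "p \<ge> 1"
    and "phylo_net p X V E"
  shows
    "bij_betw (\<lambda>S. (V, S)) {S. adm F E E S} (supp_family F p X V E)
     \<and> (\<forall>S \<subseteq> E. (V, S) \<in> supp_family F p X V E \<longleftrightarrow>
           (\<forall>Z. max_zigzag E Z \<longrightarrow> adm F E Z (S \<inter> Z)))
     \<and> (\<forall>Zs. distinct Zs \<and> set Zs = {Z. max_zigzag E Z} \<longrightarrow>
           {S. (V, S) \<in> supp_family F p X V E} =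
             {(\<Union>i<length Zs. Ss i) | Ss. \<forall>i<length Zs. adm F E (Zs ! i) (Ss i)}
         \<and> card (supp_family F p X V E) =
             (\<Prod>i<length Zs. card {S. adm F E (Zs ! i) S}))"
proof -
  note N = assms(2)
  interpret binary_digraph E by (rule phylo_net_binary_digraph[OF N])
  have supp: "supp_family F p X V E = Pair V ` {S. adm F E E S}"
    by (rule supp_family_eq_image[OF N])
  then have bij: "bij_betw (\<lambda>S. (V, S)) {S. adm F E E S} (supp_family F p X V E)"
    by (simp add: bij_betw_def inj_on_def)
  have members: "(V, S) \<in> supp_family F p X V E \<longleftrightarrow> adm F E E S" for S
    unfolding supp by auto
  have card_supp: "card (supp_family F p X V E) = card {S. adm F E E S}"
    using bij_betw_same_card[OF bij] by simp
  have local: "\<forall>S \<subseteq> E. (V, S) \<in> supp_family F p X V E \<longleftrightarrow>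
                 (\<forall>Z. max_zigzag E Z \<longrightarrow> adm F E Z (S \<inter> Z))"
    unfolding members by (simp add: adm_iff_local)
  have product: "{S. (V, S) \<in> supp_family F p X V E} =
             {(\<Union>i<length Zs. Ss i) | Ss. \<forall>i<length Zs. adm F E (Zs ! i) (Ss i)}
         \<and> card (supp_family F p X V E) = (\<Prod>i<length Zs. card {S. adm F E (Zs ! i) S})"
    if "distinct Zs \<and> set Zs = {Z. max_zigzag E Z}" for Zs
    unfolding members card_supp using adm_product_decomposition[of Zs F] that by blast
  show ?thesis using bij local product by simp
qed

end
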